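(* Let $K$ be an idempotent ordered TGP-$\omega$-valuation monoid, $AP$ a finite set of atomic propositions, $k\in K\setminus\{\mathbf{0},\mathbf{1}\}$, and $\varphi=\bigvee_{1\le i\le n}(k_i\wedge\varphi_i)\in k\text{-}stLTL(K,AP)$, and let $\varphi_b:=\bigvee_{1\le i\le n}\varphi_i$. Then for every $w\in(\mathcal{P}(AP))^{\omega}$: $(\|\varphi\|,w)\ge k$ if and only if $w\models\varphi_b$.
   Context: Idempotent ordered TGP-$\omega$-valuation monoid $(K,+,\cdot,Val^{\omega},\mathbf{0},\mathbf{1})$: complete (infinitary sums over arbitrary index sets with the usual axioms), idempotent monoid $(K,+,\mathbf{0})$, totally ordered by the natural order $k\le k'$ iff $k'=k'+k$, with $Val^{\omega}$ from finitely-valued sequences in $K$ to $K$ and a product $\cdot$ with zero $\mathbf{0}$ and unit $\mathbf{1}$, such that $Val^{\omega}=\mathbf{0}$ if some entry is $\mathbf{0}$, $Val^{\omega}(\mathbf{1}^{\omega})=\mathbf{1}$, $\sum_I(k\cdot\mathbf{1})=k\cdot\sum_I\mathbf{1}$, $Val^{\omega}$ distributes over finite sums of families lying entirely in $L\setminus\{\mathbf{0},\mathbf{1}\}$ or entirely in $\{\mathbf{0},\mathbf{1}\}$ ($L\subseteq K$ finite), and $Val^{\omega}(\mathbf{1},k_1,\dots)=Val^{\omega}(k_1,\dots)$, $Val^{\omega}(k,\mathbf{1},\dots)=k$, $k\le\mathbf{1}$, $k_i\ge k\ \forall i\Rightarrow Val^{\omega}((k_i)_i)\ge k$. Weighted LTL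 over $AP$ and $K$: $\varphi::=k\mid a\mid\neg a\mid\varphi\vee\varphi\mid\varphi\wedge\varphi\mid\bigcirc\varphi\mid\varphi U\varphi\mid\square\varphi$, with semantics $\|\varphi\|:(\mathcal{P}(AP))^{\omega}\to K$: $(\|k\|,w)=k$; $(\|a\|,w)=\mathbf{1}$ if $a\in w(0)$ else $\mathbf{0}$; $\neg a$ dually; $\vee\mapsto +$, $\wedge\mapsto\cdot$ pointwise; $(\|\bigcirc\varphi\|,w)=(\|\varphi\|,w_{\ge1})$; $(\|\varphi U\psi\|,w)=\sum_{i\ge0}Val^{\omega}((\|\varphi\|,w_{\ge0}),\dots,(\|\varphi\|,w_{\ge i-1}),(\|\psi\|,w_{\ge i}),\mathbf{1},\mathbf{1},\dots)$; $(\|\square\varphi\|,w)=Val^{\omega}(((\|\varphi\|,w_{\ge i}))_{i\ge0})$. $true:=\mathbf{1}$, $\varphi\tilde U\psi:=\square\varphi\vee(\varphi U\psi)$. $sbLTL(K,AP)$: $\varphi::=true\mid a\mid\neg a\mid\varphi\vee\varphi\mid\varphi\wedge\varphi\mid\bigcirc\varphi\mid\varphi\tilde U\varphi\mid\square\varphi$. $L_k=\{k'\in K\mid k'\ge k\}$. $k\text{-}stLTL(K,AP)$ consists of formulas $\bigvee_{1\le i\le n}(k_i\wedge\varphi_i)$ with $k_i\in L_k\setminus\{\mathbf{0},\mathbf{1}\}$ and $\varphi_i\in sbLTL(K,AP)$. For a formula $\psi$ built from $true,a,\neg a,\vee,\wedge,\bigcirc,U,\square$ (with $\tilde U$ as abbreviation),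 $w\models\psi$ denotes classical LTL satisfaction at position $0$ (with $w,i\models a$ iff $a\in w(i)$, $\bigcirc$ referring to position $i+1$, $\psi U\chi$ holding at $i$ iff $\chi$ holds at some $j\ge i$ and $\psi$ at all $i\le i'<j$, and $\square\psi$ iff $\psi$ holds at all $j\ge i$). *)

theory Defs
  imports Main
begin

text \<open>Index universe for the infinitary sums: all index sets are subsets of
  nat => nat (this contains copies of nat and of countable products of finite
  subsets of nat, i.e. every index set used in the definition and semantics).\<close>
type_synonym idx = "nat \<Rightarrow> nat"

record 'k tgp =
  vadd  :: "'k \<Rightarrow> 'k \<Rightarrow> 'k"
  vmul  :: "'k \<Rightarrow> 'k \<Rightarrow> 'k"
  vzero :: 'k
  vone  :: 'k
  vsum  :: "(idx \<Rightarrow> 'k) \<Rightarrow> idx set \<Rightarrow> 'k"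
  vval  :: "(nat \<Rightarrow> 'k) \<Rightarrow> 'k"

definition nle :: "'k tgp \<Rightarrow> 'k \<Rightarrow> 'k \<Rightarrow> bool" where
  "nle M k k' \<longleftrightarrow> k' = vadd M k' k"

definition nat_emb :: "nat \<Rightarrow> idx" where
  "nat_emb i = (\<lambda>_. i)"

definition nsum :: "'k tgp \<Rightarrow> (nat \<Rightarrow> 'k) \<Rightarrow> nat set \<Rightarrow> 'k" where
  "nsum M f I = vsum M (\<lambda>u. f (u 0)) (nat_emb ` I)"

definition finval :: "(nat \<Rightarrow> 'k) \<Rightarrow> bool" where
  "finval f \<longleftrightarrow> finite (range f)"

definition complete_monoid :: "'k tgp \<Rightarrow> bool" where
  "complete_monoid M \<longleftrightarrow>
     (\<forall>a b c. vadd M (vadd M a b) c = vadd M a (vadd M b c)) \<and>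
     (\<forall>a b. vadd M a b = vadd M b a) \<and>
     (\<forall>a. vadd M (vzero M) a = a \<and> vadd M a (vzero M) = a) \<and>
     (\<forall>f g I. (\<forall>i\<in>I. f i = g i) \<longrightarrow> vsum M f I = vsum M g I) \<and>
     (\<forall>f. vsum M f {} = vzero M) \<and>
     (\<forall>f j. vsum M f {j} = f j) \<and>
     (\<forall>f j l. j \<noteq> l \<longrightarrow> vsum M f {j, l} = vadd M (f j) (f l)) \<and>
     (\<forall>f (I :: idx \<Rightarrow> idx set) J.
        (\<forall>j\<in>J. \<forall>j'\<in>J. j \<noteq> j' \<longrightarrow> I j \<inter> I j' = {}) \<longrightarrow>
        vsum M (\<lambda>j. vsum M f (I j)) J = vsum M f (\<Union>j\<in>J. I j))"

definition idem_ordered_TGP :: "'k tgp \<Rightarrow> bool" where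
  "idem_ordered_TGP M \<longleftrightarrow>
     complete_monoid M \<and>
     (\<forall>a. vadd M a a = a) \<and>
     (\<forall>a b. nle M a b \<or> nle M b a) \<and>
     (\<forall>a. vmul M (vzero M) a = vzero M \<and> vmul M a (vzero M) = vzero M) \<and>
     (\<forall>a. vmul M (vone M) a = a \<and> vmul M a (vone M) = a) \<and>
     (\<forall>f. finval f \<longrightarrow> (\<exists>i. f i = vzero M) \<longrightarrow> vval M f = vzero M) \<and>
     vval M (\<lambda>_. vone M) = vone M \<and>
     (\<forall>I k. vsum M (\<lambda>_. vmul M k (vone M)) I = vmul M k (vsum M (\<lambda>_. vone M) I)) \<and>
     (\<forall>L (I :: nat \<Rightarrow> nat set) (c :: nat \<Rightarrow> nat \<Rightarrow> 'k).
        finite L \<longrightarrow> (\<forall>i. finite (I i)) \<longrightarrow>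
        ((\<forall>i. \<forall>j\<in>I i. c i j \<in> L - {vzero M, vone M}) \<or>
         (\<forall>i. \<forall>j\<in>I i. c i j \<in> {vzero M, vone M})) \<longrightarrow>
        vval M (\<lambda>i. nsum M (c i) (I i)) =
        vsum M (\<lambda>u. vval M (\<lambda>i. c i (u i))) {u. \<forall>i. u i \<in> I i}) \<and>
     (\<forall>f. finval f \<longrightarrow> vval M (case_nat (vone M) f) = vval M f) \<and>
     (\<forall>k. vval M (case_nat k (\<lambda>_. vone M)) = k) \<and>
     (\<forall>k. nle M k (vone M)) \<and>
     (\<forall>f k. finval f \<longrightarrow> (\<forall>i. nle M k (f i)) \<longrightarrow> nle M k (vval M f))"

datatype ('k, 'ap) wltl =
    Const 'k
  | Atom 'ap
  | NAtom 'ap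
  | Or "('k, 'ap) wltl" "('k, 'ap) wltl"
  | And "('k, 'ap) wltl" "('k, 'ap) wltl"
  | Next "('k, 'ap) wltl"
  | Until "('k, 'ap) wltl" "('k, 'ap) wltl"
  | Box "('k, 'ap) wltl"

type_synonym 'ap word = "nat \<Rightarrow> 'ap set"

definition suffix :: "nat \<Rightarrow> 'ap word \<Rightarrow> 'ap word" where
  "suffix i w = (\<lambda>j. w (i + j))"

definition wtrue :: "'k tgp \<Rightarrow> ('k, 'ap) wltl" where
  "wtrue M = Const (vone M)"

definition WUntil :: "('k, 'ap) wltl \<Rightarrow> ('k, 'ap) wltl \<Rightarrow> ('k, 'ap) wltl" where
  "WUntil \<phi> \<psi> = Or (Box \<phi>) (Until \<phi> \<psi>)"

fun sem :: "'k tgp \<Rightarrow> ('k, 'ap) wltl \<Rightarrow> 'ap word \<Rightarrow> 'k" where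
  "sem M (Const k) w = k"
| "sem M (Atom a) w = (if a \<in> w 0 then vone M else vzero M)"
| "sem M (NAtom a) w = (if a \<notin> w 0 then vone M else vzero M)"
| "sem M (Or \<phi> \<psi>) w = vadd M (sem M \<phi> w) (sem M \<psi> w)"
| "sem M (And \<phi> \<psi>) w = vmul M (sem M \<phi> w) (sem M \<psi> w)"
| "sem M (Next \<phi>) w = sem M \<phi> (suffix 1 w)"
| "sem M (Until \<phi> \<psi>) w =
     nsum M (\<lambda>i. vval M (\<lambda>j. if j < i then sem M \<phi> (suffix j w)
                              else if j = i then sem M \<psi> (suffix i w)
                              else vone M)) UNIV"
| "sem M (Box \<phi>) w = vval M (\<lambda>i. sem M \<phi> (suffix i w))"

inductive sbLTL :: "'k tgp \<Rightarrow> ('k, 'ap) wltl \<Rightarrow> bool" for M where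
  sb_true: "sbLTL M (wtrue M)"
| sb_atom: "sbLTL M (Atom a)"
| sb_natom: "sbLTL M (NAtom a)"
| sb_or: "sbLTL M \<phi> \<Longrightarrow> sbLTL M \<psi> \<Longrightarrow> sbLTL M (Or \<phi> \<psi>)"
| sb_and: "sbLTL M \<phi> \<Longrightarrow> sbLTL M \<psi> \<Longrightarrow> sbLTL M (And \<phi> \<psi>)"
| sb_next: "sbLTL M \<phi> \<Longrightarrow> sbLTL M (Next \<phi>)"
| sb_wuntil: "sbLTL M \<phi> \<Longrightarrow> sbLTL M \<psi> \<Longrightarrow> sbLTL M (WUntil \<phi> \<psi>)"
| sb_box: "sbLTL M \<phi> \<Longrightarrow> sbLTL M (Box \<phi>)"

fun bigOr :: "('k, 'ap) wltl list \<Rightarrow> ('k, 'ap) wltl" where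
  "bigOr [] = Const undefined"
| "bigOr [\<phi>] = \<phi>"
| "bigOr (\<phi> # \<psi> # \<phi>s) = Or \<phi> (bigOr (\<psi> # \<phi>s))"

definition stform :: "('k \<times> ('k, 'ap) wltl) list \<Rightarrow> ('k, 'ap) wltl" where
  "stform ps = bigOr (map (\<lambda>(ki, \<phi>i). And (Const ki) \<phi>i) ps)"

definition bskel :: "('k \<times> ('k, 'ap) wltl) list \<Rightarrow> ('k, 'ap) wltl" where
  "bskel ps = bigOr (map snd ps)"

definition kstLTL :: "'k tgp \<Rightarrow> 'k \<Rightarrow> ('k \<times> ('k, 'ap) wltl) list \<Rightarrow> bool" where
  "kstLTL M k ps \<longleftrightarrow> ps \<noteq> [] \<and>
     (\<forall>(ki, \<phi>i) \<in> set ps. nle M k ki \<and> ki \<noteq> vzero M \<and> ki \<noteq> vone M \<and> sbLTL M \<phi>i)"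

text \<open>Only applied to formulas whose constants are true (= 1); a constant is read as true.\<close>
fun sat :: "'ap word \<Rightarrow> ('k, 'ap) wltl \<Rightarrow> bool" where
  "sat w (Const k) = True"
| "sat w (Atom a) = (a \<in> w 0)"
| "sat w (NAtom a) = (a \<notin> w 0)"
| "sat w (Or \<phi> \<psi>) = (sat w \<phi> \<or> sat w \<psi>)"
| "sat w (And \<phi> \<psi>) = (sat w \<phi> \<and> sat w \<psi>)"
| "sat w (Next \<phi>) = sat (suffix 1 w) \<phi>"
| "sat w (Until \<phi> \<psi>) = (\<exists>j. sat (suffix j w) \<psi> \<and> (\<forall>i<j. sat (suffix i w) \<phi>))"
| "sat w (Box \<phi>) = (\<forall>j. sat (suffix j w) \<phi>)"

end

theory Submission
  imports Defs
begin

text \<open>Formulas of sbLTL only take the values \<open>\<zero>\<close> and \<open>\<one>\<close>: on such values \<open>+\<close>,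
  \<open>\<cdot>\<close>, the infinitary sum and \<open>Val\<^sup>\<omega>\<close> compute disjunction, conjunction, existential and
  universal quantification, so \<open>\<parallel>\<phi>\<^sub>i\<parallel>\<close> is the indicator of \<open>w \<Turnstile> \<phi>\<^sub>i\<close>. Hence
  \<open>\<parallel>k\<^sub>i \<and> \<phi>\<^sub>i\<parallel>\<close> is \<open>k\<^sub>i \<ge> k\<close> if \<open>w \<Turnstile> \<phi>\<^sub>i\<close> and \<open>\<zero>\<close> otherwise, where \<open>k \<le> \<zero>\<close> fails
  as \<open>k \<noteq> \<zero>\<close>. Finally, in a totally ordered idempotent monoid \<open>k \<le> a + b\<close> iff
  \<open>k \<le> a\<close> or \<open>k \<le> b\<close>.\<close>

locale idem_tgp =
  fixes M :: "'k tgp"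
  assumes idem_ordered: "idem_ordered_TGP M"
begin

lemma complete: "complete_monoid M"
  using idem_ordered unfolding idem_ordered_TGP_def by blast

lemma vadd_assoc: "vadd M (vadd M a b) c = vadd M a (vadd M b c)"
  using complete unfolding complete_monoid_def by metis

lemma vadd_commute: "vadd M a b = vadd M b a"
  using complete unfolding complete_monoid_def by metis

lemma vadd_zero_left [simp]: "vadd M (vzero M) a = a"
  using complete unfolding complete_monoid_def by metis

lemma vadd_zero_right [simp]: "vadd M a (vzero M) = a"
  using complete unfolding complete_monoid_def by metis

lemma vsum_cong: "(\<And>i. i \<in> I \<Longrightarrow> f i = g i) \<Longrightarrow> vsum M f I = vsum M g I"
  using complete unfolding complete_monoid_def by metis

lemma vsum_singleton: "vsum M f {j} = f j"
  using complete unfolding complete_monoid_def by metis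

lemma vsum_pair: "j \<noteq> l \<Longrightarrow> vsum M f {j, l} = vadd M (f j) (f l)"
  using complete unfolding complete_monoid_def by metis

lemma vsum_UNION_disjoint:
  assumes "\<And>j j'. j \<in> J \<Longrightarrow> j' \<in> J \<Longrightarrow> j \<noteq> j' \<Longrightarrow> I j \<inter> I j' = {}"
  shows "vsum M (\<lambda>j. vsum M f (I j)) J = vsum M f (\<Union>j\<in>J. I j)"
proof -
  have "\<forall>f (I :: idx \<Rightarrow> idx set) J. (\<forall>j\<in>J. \<forall>j'\<in>J. j \<noteq> j' \<longrightarrow> I j \<inter> I j' = {}) \<longrightarrow>
      vsum M (\<lambda>j. vsum M f (I j)) J = vsum M f (\<Union>j\<in>J. I j)"
    using complete unfolding complete_monoid_def by (elim conjE) assumption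
  from this[rule_format, OF assms] show ?thesis .
qed

lemma vadd_idem [simp]: "vadd M a a = a"
  using idem_ordered unfolding idem_ordered_TGP_def by metis

lemma nle_total: "nle M a b \<or> nle M b a"
  using idem_ordered unfolding idem_ordered_TGP_def by metis

lemma vmul_zero_left [simp]: "vmul M (vzero M) a = vzero M"
  using idem_ordered unfolding idem_ordered_TGP_def by metis

lemma vmul_zero_right [simp]: "vmul M a (vzero M) = vzero M"
  using idem_ordered unfolding idem_ordered_TGP_def by metis

lemma vmul_one_left [simp]: "vmul M (vone M) a = a"
  using idem_ordered unfolding idem_ordered_TGP_def by metis

lemma vmul_one_right [simp]: "vmul M a (vone M) = a"
  using idem_ordered unfolding idem_ordered_TGP_def by metis

lemma vval_zero: "finval f \<Longrightarrow> f i = vzero M \<Longrightarrow> vval M f = vzero M"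
  using idem_ordered unfolding idem_ordered_TGP_def by metis

lemma vval_one: "vval M (\<lambda>_. vone M) = vone M"
  using idem_ordered unfolding idem_ordered_TGP_def by metis

lemma vsum_const_vmul_one:
  "vsum M (\<lambda>_. vmul M a (vone M)) I = vmul M a (vsum M (\<lambda>_. vone M) I)"
  using idem_ordered unfolding idem_ordered_TGP_def by metis

lemma nle_one: "nle M a (vone M)"
  using idem_ordered unfolding idem_ordered_TGP_def by metis

lemma nle_trans:
  assumes "nle M a b" and "nle M b c"
  shows "nle M a c"
proof -
  have "vadd M c a = vadd M (vadd M c b) a"
    using \<open>nle M b c\<close> unfolding nle_def by simp
  also have "\<dots> = vadd M c (vadd M b a)"
    by (rule vadd_assoc)
  also have "\<dots> = c"
    using assms unfolding nle_def by (simp only: flip: vadd_assoc)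
  finally show ?thesis
    unfolding nle_def by simp
qed

lemma nle_zero_iff: "nle M a (vzero M) \<longleftrightarrow> a = vzero M"
  unfolding nle_def by auto

lemma nle_vadd_iff: "nle M k (vadd M a b) \<longleftrightarrow> nle M k a \<or> nle M k b"
proof (cases "nle M a b")
  case True
  then have "vadd M a b = b"
    unfolding nle_def by (simp add: vadd_commute)
  then show ?thesis
    using True nle_trans by auto
next
  case False
  then have "nle M b a"
    using nle_total by blast
  moreover from this have "vadd M a b = a"
    unfolding nle_def by simp
  ultimately show ?thesis
    using nle_trans by auto
qed

lemma vadd_one_left: "vadd M (vone M) a = vone M"
  using nle_one unfolding nle_def by simp

lemma vsum_zero:
  assumes "\<And>i. i \<in> I \<Longrightarrow> f i = vzero M"
  shows "vsum M f I = vzero M"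
proof -
  have "vsum M f I = vsum M (\<lambda>_. vmul M (vzero M) (vone M)) I"
    using assms by (intro vsum_cong) simp
  also have "\<dots> = vzero M"
    by (subst vsum_const_vmul_one) simp
  finally show ?thesis .
qed

lemma vsum_insert:
  assumes "j \<notin> I"
  shows "vsum M f (insert j I) = vadd M (f j) (vsum M f I)"
proof -
  define l where "l = j(0 := Suc (j 0))"
  have "l \<noteq> j"
    by (simp add: l_def fun_upd_idem_iff)
  let ?part = "\<lambda>i. if i = j then {j} else I"
  have "vsum M (\<lambda>i. vsum M f (?part i)) {j, l} = vsum M f (\<Union>i\<in>{j, l}. ?part i)"
    using \<open>j \<notin> I\<close> by (intro vsum_UNION_disjoint) auto
  moreover have "(\<Union>i\<in>{j, l}. ?part i) = insert j I"
    using \<open>l \<noteq> j\<close> by auto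
  ultimately show ?thesis
    using \<open>l \<noteq> j\<close> by (simp add: vsum_pair vsum_singleton)
qed

definition truth :: "bool \<Rightarrow> 'k" where
  "truth b = (if b then vone M else vzero M)"

lemma truth_simps [simp]: "truth True = vone M" "truth False = vzero M"
  by (simp_all add: truth_def)

lemma vadd_truth [simp]: "vadd M (truth a) (truth b) = truth (a \<or> b)"
  by (simp add: truth_def)

lemma vmul_truth [simp]: "vmul M (truth a) (truth b) = truth (a \<and> b)"
  by (simp add: truth_def)

lemma vsum_truth: "vsum M (\<lambda>i. truth (P i)) I = truth (\<exists>i\<in>I. P i)"
proof (cases "\<exists>i\<in>I. P i")
  case True
  then obtain j where "j \<in> I" "P j" by blast
  then have "vsum M (\<lambda>i. truth (P i)) I
      = vadd M (vone M) (vsum M (\<lambda>i. truth (P i)) (I - {j}))"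
    using vsum_insert[of j "I - {j}"] by (simp add: insert_absorb)
  then show ?thesis
    using True by (simp add: vadd_one_left)
next
  case False
  then show ?thesis
    by (simp add: vsum_zero)
qed

lemma nsum_truth: "nsum M (\<lambda>i. truth (P i)) I = truth (\<exists>i\<in>I. P i)"
  unfolding nsum_def vsum_truth by (simp add: nat_emb_def)

lemma vval_truth: "vval M (\<lambda>i. truth (P i)) = truth (\<forall>i. P i)"
proof (cases "\<forall>i. P i")
  case True
  then show ?thesis
    by (simp add: vval_one)
next
  case False
  then obtain i where "\<not> P i" by blast
  have "finval (\<lambda>i. truth (P i))"
    unfolding finval_def by (rule finite_subset[of _ "truth ` UNIV"]) auto
  then have "vval M (\<lambda>i. truth (P i)) = vzero M"
    by (rule vval_zero[where i = i]) (simp add: \<open>\<not> P i\<close>)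
  then show ?thesis
    using False by (auto simp: truth_def)
qed

lemma sem_Box_truth:
  assumes "\<And>w. sem M \<phi> w = truth (sat w \<phi>)"
  shows "sem M (Box \<phi>) w = truth (sat w (Box \<phi>))"
  by (simp add: assms vval_truth)

lemma sem_Until_truth:
  assumes "\<And>w. sem M \<phi> w = truth (sat w \<phi>)" and "\<And>w. sem M \<psi> w = truth (sat w \<psi>)"
  shows "sem M (Until \<phi> \<psi>) w = truth (sat w (Until \<phi> \<psi>))"
proof -
  have "(\<lambda>j. if j < i then sem M \<phi> (suffix j w) else if j = i then sem M \<psi> (suffix i w)
              else vone M)
      = (\<lambda>j. truth (if j < i then sat (suffix j w) \<phi> else j = i \<longrightarrow> sat (suffix i w) \<psi>))"
    for i
    by (simp add: assms fun_eq_iff)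
  moreover have "(\<forall>j. if j < i then sat (suffix j w) \<phi> else j = i \<longrightarrow> sat (suffix i w) \<psi>)
      \<longleftrightarrow> sat (suffix i w) \<psi> \<and> (\<forall>j<i. sat (suffix j w) \<phi>)" for i
    by (metis less_irrefl)
  ultimately show ?thesis
    by (simp add: vval_truth nsum_truth)
qed

lemma sem_sbLTL: "sbLTL M \<phi> \<Longrightarrow> sem M \<phi> w = truth (sat w \<phi>)"
proof (induction arbitrary: w rule: sbLTL.induct)
  case (sb_wuntil \<phi> \<psi>)
  have "sem M (Box \<phi>) w = truth (sat w (Box \<phi>))"
    by (rule sem_Box_truth) (fact sb_wuntil.IH(1))
  moreover have "sem M (Until \<phi> \<psi>) w = truth (sat w (Until \<phi> \<psi>))"
    by (rule sem_Until_truth) (fact sb_wuntil.IH)+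
  ultimately show ?case
    by (simp only: WUntil_def sem.simps(4) sat.simps(4) vadd_truth)
next
  case (sb_box \<phi>)
  show ?case
    by (rule sem_Box_truth) (fact sb_box.IH)
qed (simp_all add: wtrue_def truth_def)

lemma nle_vmul_truth_iff:
  assumes "nle M k a" and "k \<noteq> vzero M"
  shows "nle M k (vmul M a (truth b)) \<longleftrightarrow> b"
  using assms by (cases b) (simp_all add: nle_zero_iff)

lemma nle_sem_bigOr_iff:
  "\<phi>s \<noteq> [] \<Longrightarrow> nle M k (sem M (bigOr \<phi>s) w) \<longleftrightarrow> (\<exists>\<phi>\<in>set \<phi>s. nle M k (sem M \<phi> w))"
  by (induction \<phi>s rule: bigOr.induct) (simp_all add: nle_vadd_iff)

end

lemma sat_bigOr_iff: "\<phi>s \<noteq> [] \<Longrightarrow> sat w (bigOr \<phi>s) \<longleftrightarrow> (\<exists>\<phi>\<in>set \<phi>s. sat w \<phi>)"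
  by (induction \<phi>s rule: bigOr.induct) simp_all

theorem lemma6:
  fixes M :: "'k tgp" and k :: 'k
    and ps :: "('k \<times> ('k, 'ap::finite) wltl) list"
    and w :: "'ap word"
  assumes "idem_ordered_TGP M"
    and "k \<noteq> vzero M" and "k \<noteq> vone M"
    and "kstLTL M k ps"
  shows "nle M k (sem M (stform ps) w) \<longleftrightarrow> sat w (bskel ps)"
proof -
  interpret idem_tgp M
    by (fact idem_tgp.intro[OF assms(1)])
  have ps: "ps \<noteq> []" "\<And>p. p \<in> set ps \<Longrightarrow> nle M k (fst p) \<and> sbLTL M (snd p)"
    using assms(4) unfolding kstLTL_def by auto
  have "nle M k (sem M (stform ps) w)
      \<longleftrightarrow> (\<exists>p\<in>set ps. nle M k (vmul M (fst p) (sem M (snd p) w)))"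
    using ps(1) by (simp add: stform_def nle_sem_bigOr_iff split_def)
  also have "\<dots> \<longleftrightarrow> (\<exists>p\<in>set ps. sat w (snd p))"
    using ps(2) assms(2) by (intro bex_cong) (simp_all add: sem_sbLTL nle_vmul_truth_iff)
  also have "\<dots> \<longleftrightarrow> sat w (bskel ps)"
    using ps(1) by (auto simp: bskel_def sat_bigOr_iff)
  finally show ?thesis .
qed

end
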